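(* Let $1\le j\le k$ be integers, let $G$ and $H$ be $(j,k)$-bicliques with interesting factors $g(x)$ and $h(x)$, and suppose $g(x)=(-1)^j h(-x+c)$ for some integer $c$. Then $$P_G(c+1)=\binom{c+1}{k}(-1)^{j+k}P_H(-1).$$ In particular, if $G$ and $H$ are complementary $(j,k)$-bicliques, then the number of proper $(j+k)$-colourings of $G$ equals $\binom{j+k}{k}$ times the number of acyclic orientations of $H$.
   Context: All graphs are finite and simple. For integers $1\le j\le k$, a $(j,k)$-biclique is a graph whose vertex set is the disjoint union of a $j$-clique and a $k$-clique, with an arbitrary set of additional edges (bridging edges) each joining a vertex of the $j$-clique to a vertex of the $k$-clique. Two $(j,k)$-bicliques $G,H$ on the same two cliques are complementary if $H$ is obtained from $G$ by replacing every bridging edge by a non-edge and every non-adjacent pair (one vertex in each clique) by an edge. $P_G(x)$ is the chromatic polynomial; $(x)_n=x(x-1)\cdots(x-n+1)$; the interesting factor of a $(j,k)$-biclique $G$ is $P_G(x)/(x)_k$, a polynomial of degree $j$. An acyclic orientation of a graph is an assignment of a direction to each edge producing no directed cycle. (Stanley's theorem, which may be used: for an $n$-vertex graph $F$, $(-1)^nP_F(-1)$ is the number of acyclic orientations of $F$.) *)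

theory Defs
  imports Main "HOL-Library.FuncSet" "HOL-Computational_Algebra.Polynomial"
begin

definition simple_graph :: "'a set \<Rightarrow> 'a set set \<Rightarrow> bool" where
  "simple_graph V E \<longleftrightarrow> finite V \<and> (\<forall>e\<in>E. e \<subseteq> V \<and> card e = 2)"

definition biclique :: "nat \<Rightarrow> nat \<Rightarrow> 'a set \<Rightarrow> 'a set set \<Rightarrow> 'a set \<Rightarrow> 'a set \<Rightarrow> bool" where
  "biclique j k V E A B \<longleftrightarrow> simple_graph V E \<and> A \<inter> B = {} \<and> V = A \<union> B \<and>
     card A = j \<and> card B = k \<and>
     (\<forall>x\<in>A. \<forall>y\<in>A. x \<noteq> y \<longrightarrow> {x, y} \<in> E) \<and>
     (\<forall>x\<in>B. \<forall>y\<in>B. x \<noteq> y \<longrightarrow> {x, y} \<in> E) \<and>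
     (\<forall>e\<in>E. e \<subseteq> A \<or> e \<subseteq> B \<or> (\<exists>x\<in>A. \<exists>y\<in>B. e = {x, y}))"

definition complementary :: "'a set \<Rightarrow> 'a set \<Rightarrow> 'a set set \<Rightarrow> 'a set set \<Rightarrow> bool" where
  "complementary A B EG EH \<longleftrightarrow> (\<forall>x\<in>A. \<forall>y\<in>B. {x, y} \<in> EH \<longleftrightarrow> {x, y} \<notin> EG)"

definition num_colourings :: "'a set \<Rightarrow> 'a set set \<Rightarrow> nat \<Rightarrow> nat" where
  "num_colourings V E n = card {f \<in> V \<rightarrow>\<^sub>E {..<n}. \<forall>x y. {x, y} \<in> E \<longrightarrow> f x \<noteq> f y}"

definition chrom_poly :: "'a set \<Rightarrow> 'a set set \<Rightarrow> int poly" where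
  "chrom_poly V E = (THE p. \<forall>n::nat. poly p (int n) = int (num_colourings V E n))"

definition falling_poly :: "nat \<Rightarrow> int poly" where
  "falling_poly k = (\<Prod>i<k. [:- int i, 1:])"

definition interesting_factor :: "nat \<Rightarrow> 'a set \<Rightarrow> 'a set set \<Rightarrow> int poly" where
  "interesting_factor k V E = chrom_poly V E div falling_poly k"

definition orientation :: "'a set set \<Rightarrow> ('a \<times> 'a) set \<Rightarrow> bool" where
  "orientation E R \<longleftrightarrow> R \<subseteq> {(x, y). {x, y} \<in> E} \<and>
     (\<forall>x y. {x, y} \<in> E \<longrightarrow> ((x, y) \<in> R \<longleftrightarrow> (y, x) \<notin> R))"

definition num_acyclic_orientations :: "'a set set \<Rightarrow> nat" where
  "num_acyclic_orientations E = card {R. orientation E R \<and> acyclic R}"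

end

theory Submission
  imports Defs
begin

(* Let G be a (j,k)-biclique on cliques A, B.  Everything is expressed through the partial
   matchings M of pairs (a, b) in A x B.

   A proper colouring of G is injective on A and on B and may give a in A and
   b in B the same colour only if ab is a non-edge.  Deleting the admissible non-edges one
   at a time shows that the number of proper n-colourings is the sum over the matchings M of
   non-edges of (n)_(j+k-|M|).  So P_G(x) is the sum of (x)_(j+k-|M|), visibly (x)_k times
   the interesting factor, and the first claim follows by evaluating
   P_G(c+1) = (c+1)_k g(c+1) = (-1)^j (c+1)_k h(-1) and P_H(-1) = (-1)_k h(-1).

   An acyclic orientation of a nonempty
   biclique has at most one source in each clique and at least one source, and two sources
   in different cliques are non-adjacent; removing sources gives acyclic orientations of
   smaller bicliques.  Double counting sources yields a deletion recursion, which the sum of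
   j! k! / |M|! over the matchings M of the bridging edges also satisfies, so this sum is the
   number of acyclic orientations.  For complementary G, H the non-edges of G between the
   cliques are the bridging edges of H, and (j+k)_(j+k-m) = (j+k)!/m! = C(j+k,k) j! k!/m!. *)

text \<open>Falling factorial (n)_r = n (n-1) ... (n-r+1) on the natural numbers, in the form in which
  the library counts injective maps.\<close>
definition falling_nat :: "nat \<Rightarrow> nat \<Rightarrow> nat" where
  "falling_nat r n = prod ((-) n) {0..<r}"

lemma falling_nat_Suc: "falling_nat (Suc r) n = n * falling_nat r (n - 1)"
  unfolding falling_nat_def by (simp add: prod.atLeast0_lessThan_Suc_shift del: prod.op_ivl_Suc)

lemma falling_nat_fact: "r \<le> n \<Longrightarrow> falling_nat r n * fact (n - r) = (fact n :: nat)"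
proof (induction r arbitrary: n)
  case (Suc r)
  then obtain m where n: "n = Suc m" and r: "r \<le> m" by (cases n) auto
  have "falling_nat (Suc r) n * fact (n - Suc r) = n * (falling_nat r m * fact (m - r))"
    by (simp only: n falling_nat_Suc diff_Suc_Suc diff_Suc_1 mult.assoc)
  also have "\<dots> = fact n" using Suc.IH[OF r] by (simp add: n)
  finally show ?case .
qed (simp add: falling_nat_def)

lemma poly_falling_poly: "poly (falling_poly r) x = (\<Prod>i<r. x - int i)"
  unfolding falling_poly_def by (simp add: poly_prod)

lemma poly_falling_poly_nat: "poly (falling_poly r) (int n) = int (falling_nat r n)"
proof (induction r)
  case (Suc r)
  have "falling_nat (Suc r) n = falling_nat r n * (n - r)" by (simp add: falling_nat_def)
  moreover have "falling_nat r n = 0" if "n < r"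
    unfolding falling_nat_def using that by (intro prod_zero) auto
  ultimately show ?case using Suc by (cases "r \<le> n") (simp_all add: poly_falling_poly of_nat_diff)
qed (simp add: poly_falling_poly falling_nat_def)

section \<open>Matchings and double counting\<close>

lemma sum_swap_filter:
  assumes "finite A" "finite S"
  shows "(\<Sum>a\<in>A. \<Sum>M\<in>{M \<in> S. P a M}. f M) = (\<Sum>M\<in>S. real (card {a \<in> A. P a M}) * f M)"
  using sum.swap_restrict[OF assms, of "\<lambda>a M. f M" P] by simp

lemma sum_card_swap:
  assumes "finite X" "finite S"
  shows "(\<Sum>x\<in>X. card {y \<in> S. P x y}) = (\<Sum>y\<in>S. card {x \<in> X. P x y})"
  using sum.swap_restrict[OF assms, of "\<lambda>_ _. 1::nat" P] by simp

definition matchings :: "('a \<times> 'b) set \<Rightarrow> ('a \<times> 'b) set set" where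
  "matchings Y = {M. M \<subseteq> Y \<and> inj_on fst M \<and> inj_on snd M}"

lemma finite_matchings: "finite Y \<Longrightarrow> finite (matchings Y)"
  unfolding matchings_def by (rule finite_subset[of _ "Pow Y"]) auto

lemma matchings_empty: "matchings {} = {{}}"
  by (auto simp: matchings_def)

lemma matchings_restrict: "matchings {p \<in> Y. Q p} = {M \<in> matchings Y. \<forall>p\<in>M. Q p}"
  unfolding matchings_def by auto

lemma card_fst_matching: "M \<in> matchings Y \<Longrightarrow> card (fst ` M) = card M"
  and card_snd_matching: "M \<in> matchings Y \<Longrightarrow> card (snd ` M) = card M"
  unfolding matchings_def by (simp_all add: card_image)

lemma matching_card_le:
  assumes "M \<in> matchings Y" "Y \<subseteq> A \<times> B" "finite A" "finite B"
  shows "card M \<le> card A" "card M \<le> card B"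
proof -
  have "fst ` M \<subseteq> A" "snd ` M \<subseteq> B" using assms by (auto simp: matchings_def)
  thus "card M \<le> card A" "card M \<le> card B"
    using assms card_mono card_fst_matching[OF assms(1)] card_snd_matching[OF assms(1)] by metis+
qed

lemma matchings_split:
  assumes "e \<in> Y"
  shows "matchings Y = matchings (Y - {e})
           \<union> insert e ` matchings {p \<in> Y. fst p \<noteq> fst e \<and> snd p \<noteq> snd e}"
    (is "_ = ?L \<union> ?R")
proof
  show "matchings Y \<subseteq> ?L \<union> ?R"
  proof
    fix M assume M: "M \<in> matchings Y"
    show "M \<in> ?L \<union> ?R"
    proof (cases "e \<in> M")
      case False thus ?thesis using M by (auto simp: matchings_def)
    next
      case True
      have "M - {e} \<in> matchings {p \<in> Y. fst p \<noteq> fst e \<and> snd p \<noteq> snd e}"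
        using M True unfolding matchings_def inj_on_def by auto
      moreover have "M = insert e (M - {e})" using True by auto
      ultimately show ?thesis by blast
    qed
  qed
  show "?L \<union> ?R \<subseteq> matchings Y"
    using assms unfolding matchings_def inj_on_def by auto
qed

lemma sum_matchings_split:
  assumes "e \<in> Y" "finite Y"
  shows "(\<Sum>M\<in>matchings Y. F (card M)) = (\<Sum>M\<in>matchings (Y - {e}). F (card M))
     + (\<Sum>M\<in>matchings {p \<in> Y. fst p \<noteq> fst e \<and> snd p \<noteq> snd e}. F (Suc (card M)))"
proof -
  let ?Y' = "{p \<in> Y. fst p \<noteq> fst e \<and> snd p \<noteq> snd e}"
  have fin: "finite (matchings (Y - {e}))" "finite (matchings ?Y')"
    using assms by (auto intro: finite_matchings)
  have disj: "matchings (Y - {e}) \<inter> insert e ` matchings ?Y' = {}"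
    unfolding matchings_def by auto
  have inj: "inj_on (insert e) (matchings ?Y')"
    unfolding matchings_def inj_on_def by auto
  have card_insert: "card (insert e M) = Suc (card M)" if "M \<in> matchings ?Y'" for M
  proof -
    have "e \<notin> M" "finite M" using that assms by (auto simp: matchings_def intro: finite_subset)
    thus ?thesis by simp
  qed
  show ?thesis
    using fin disj inj card_insert
    by (simp add: matchings_split[OF assms(1)] sum.union_disjoint sum.reindex)
qed

text \<open>Double counting pairs (M, p) where p extends the matching M: both sides count
  the matchings M' = insert p M weighted by their size.\<close>
lemma sum_matching_extensions:
  assumes finY: "finite Y"
  shows "(\<Sum>M\<in>matchings Y. real (card {p \<in> Y. fst p \<notin> fst ` M \<and> snd p \<notin> snd ` M}) * g (card M))
       = (\<Sum>M\<in>matchings Y. real (card M) * g (card M - 1))"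
proof -
  have finM: "finite M" if "M \<in> matchings Y" for M
    using that finY by (auto simp: matchings_def intro: finite_subset)
  let ?P = "SIGMA M:matchings Y. {p \<in> Y. fst p \<notin> fst ` M \<and> snd p \<notin> snd ` M}"
  let ?Q = "SIGMA M:matchings Y. M"
  have "(\<Sum>M\<in>matchings Y. real (card {p \<in> Y. fst p \<notin> fst ` M \<and> snd p \<notin> snd ` M}) * g (card M))
      = (\<Sum>M\<in>matchings Y. \<Sum>p\<in>{p \<in> Y. fst p \<notin> fst ` M \<and> snd p \<notin> snd ` M}. g (card M))"
    by simp
  also have "\<dots> = (\<Sum>(M, p)\<in>?P. g (card M))"
    by (rule sum.Sigma) (use finY finite_matchings in auto)
  also have "\<dots> = (\<Sum>(M, p)\<in>?Q. g (card M - 1))"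
  proof (rule sum.reindex_bij_witness[where i = "\<lambda>(M, p). (M - {p}, p)" and j = "\<lambda>(M, p). (insert p M, p)"])
    fix Mp assume "Mp \<in> ?Q"
    then obtain M p where Mp: "Mp = (M, p)" and M: "M \<in> matchings Y" "p \<in> M" by auto
    have "M - {p} \<in> matchings Y" using M by (auto simp: matchings_def intro: inj_on_subset)
    moreover have "fst p \<notin> fst ` (M - {p})" "snd p \<notin> snd ` (M - {p})" "p \<in> Y"
      using M unfolding matchings_def inj_on_def by auto
    ultimately show "(case Mp of (M, p) \<Rightarrow> (M - {p}, p)) \<in> ?P"
      and "(case case Mp of (M, p) \<Rightarrow> (M - {p}, p) of (M, p) \<Rightarrow> (insert p M, p)) = Mp"
      using M Mp by auto
  next
    fix Mp assume "Mp \<in> ?P"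
    then obtain M p where Mp: "Mp = (M, p)" and M: "M \<in> matchings Y" "p \<in> Y"
      and new: "fst p \<notin> fst ` M" "snd p \<notin> snd ` M" by auto
    have "p \<notin> M" using new by auto
    moreover have "insert p M \<in> matchings Y" using M new by (auto simp: matchings_def)
    ultimately show "(case Mp of (M, p) \<Rightarrow> (insert p M, p)) \<in> ?Q"
      and "(case case Mp of (M, p) \<Rightarrow> (insert p M, p) of (M, p) \<Rightarrow> (M - {p}, p)) = Mp"
      and "(case case Mp of (M, p) \<Rightarrow> (insert p M, p) of (M, p) \<Rightarrow> g (card M - 1))
             = (case Mp of (M, p) \<Rightarrow> g (card M))"
      using Mp finM[OF M(1)] by auto
  qed
  also have "\<dots> = (\<Sum>M\<in>matchings Y. real (card M) * g (card M - 1))"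
    by (simp add: sum.Sigma[symmetric] finY finite_matchings finM)
  finally show ?thesis .
qed

text \<open>The three kinds of deletion used in the recursion for acyclic orientations, expressed
  through the matchings of Y \<subseteq> A \<times> B: deleting a vertex of A, a vertex of B, or both
  ends of a pair outside Y.\<close>
lemma sum_matchings_delete_fst:
  assumes "finite A" "finite B" "Y \<subseteq> A \<times> B"
  shows "(\<Sum>a\<in>A. \<Sum>M\<in>matchings {p \<in> Y. fst p \<noteq> a}. g (card M))
       = (\<Sum>M\<in>matchings Y. (real (card A) - real (card M)) * g (card M))"
proof -
  have finY: "finite Y" using assms by (auto intro: finite_subset)
  have "card {a \<in> A. \<forall>p\<in>M. fst p \<noteq> a} = card A - card M" if M: "M \<in> matchings Y" for M
  proof -
    have "{a \<in> A. \<forall>p\<in>M. fst p \<noteq> a} = A - fst ` M" by auto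
    moreover have "fst ` M \<subseteq> A" using M assms by (auto simp: matchings_def)
    ultimately show ?thesis
      using assms by (simp add: card_Diff_subset card_fst_matching[OF M] finite_subset)
  qed
  moreover have "card M \<le> card A" if "M \<in> matchings Y" for M
    using matching_card_le[OF that assms(3,1,2)] by simp
  ultimately show ?thesis
    unfolding matchings_restrict
    by (subst sum_swap_filter[OF assms(1) finite_matchings[OF finY]]) (simp add: of_nat_diff)
qed

lemma sum_matchings_delete_snd:
  assumes "finite A" "finite B" "Y \<subseteq> A \<times> B"
  shows "(\<Sum>b\<in>B. \<Sum>M\<in>matchings {p \<in> Y. snd p \<noteq> b}. g (card M))
       = (\<Sum>M\<in>matchings Y. (real (card B) - real (card M)) * g (card M))"
proof -
  have finY: "finite Y" using assms by (auto intro: finite_subset)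
  have "card {b \<in> B. \<forall>p\<in>M. snd p \<noteq> b} = card B - card M" if M: "M \<in> matchings Y" for M
  proof -
    have "{b \<in> B. \<forall>p\<in>M. snd p \<noteq> b} = B - snd ` M" by auto
    moreover have "snd ` M \<subseteq> B" using M assms by (auto simp: matchings_def)
    ultimately show ?thesis
      using assms by (simp add: card_Diff_subset card_snd_matching[OF M] finite_subset)
  qed
  moreover have "card M \<le> card B" if "M \<in> matchings Y" for M
    using matching_card_le[OF that assms(3,1,2)] by simp
  ultimately show ?thesis
    unfolding matchings_restrict
    by (subst sum_swap_filter[OF assms(2) finite_matchings[OF finY]]) (simp add: of_nat_diff)
qed

lemma card_free_pairs_outside:
  assumes M: "M \<in> matchings Y" and Y: "Y \<subseteq> A \<times> B" and fin: "finite A" "finite B"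
  shows "real (card {p \<in> A \<times> B - Y. \<forall>q\<in>M. fst q \<noteq> fst p \<and> snd q \<noteq> snd p})
    = (real (card A) - real (card M)) * (real (card B) - real (card M))
      - real (card {p \<in> Y. fst p \<notin> fst ` M \<and> snd p \<notin> snd ` M})"
proof -
  let ?U = "(A - fst ` M) \<times> (B - snd ` M)"
  let ?W = "{p \<in> Y. fst p \<notin> fst ` M \<and> snd p \<notin> snd ` M}"
  have eq: "{p \<in> A \<times> B - Y. \<forall>q\<in>M. fst q \<noteq> fst p \<and> snd q \<noteq> snd p} = ?U - ?W"
    by (fastforce simp: image_iff)
  have sub: "?W \<subseteq> ?U"
  proof
    fix p assume p: "p \<in> ?W"
    hence "fst p \<in> A" "snd p \<in> B" using Y by auto
    thus "p \<in> ?U" using p by (simp add: mem_Times_iff)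
  qed
  have finU: "finite ?U" using fin by auto
  have "fst ` M \<subseteq> A" "snd ` M \<subseteq> B" using M Y by (auto simp: matchings_def)
  hence "card ?U = (card A - card M) * (card B - card M)"
    using fin card_fst_matching[OF M] card_snd_matching[OF M]
    by (simp add: card_cartesian_product card_Diff_subset finite_subset)
  moreover have "card M \<le> card A" "card M \<le> card B" using matching_card_le[OF M Y fin] by auto
  moreover have "real (card (?U - ?W)) = real (card ?U) - real (card ?W)"
    using card_Diff_subset[OF finite_subset[OF sub finU] sub] card_mono[OF finU sub] by simp
  ultimately show ?thesis unfolding eq by (simp add: of_nat_diff)
qed

lemma sum_matchings_delete_pair:
  assumes fin: "finite A" "finite B" and Y: "Y \<subseteq> A \<times> B"
  shows "(\<Sum>p\<in>A \<times> B - Y. \<Sum>M\<in>matchings {q \<in> Y. fst q \<noteq> fst p \<and> snd q \<noteq> snd p}. g (card M))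
       = (\<Sum>M\<in>matchings Y. (real (card A) - real (card M)) * (real (card B) - real (card M)) * g (card M))
         - (\<Sum>M\<in>matchings Y. real (card M) * g (card M - 1))"
proof -
  have finY: "finite Y" using fin Y by (auto intro: finite_subset)
  have "(\<Sum>p\<in>A \<times> B - Y. \<Sum>M\<in>matchings {q \<in> Y. fst q \<noteq> fst p \<and> snd q \<noteq> snd p}. g (card M))
      = (\<Sum>M\<in>matchings Y. real (card {p \<in> A \<times> B - Y. \<forall>q\<in>M. fst q \<noteq> fst p \<and> snd q \<noteq> snd p}) * g (card M))"
    unfolding matchings_restrict using fin finY finite_matchings
    by (subst sum_swap_filter) auto
  also have "\<dots> = (\<Sum>M\<in>matchings Y. (real (card A) - real (card M)) * (real (card B) - real (card M)) * g (card M)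
      - real (card {p \<in> Y. fst p \<notin> fst ` M \<and> snd p \<notin> snd ` M}) * g (card M))"
  proof (intro sum.cong refl)
    fix M assume M: "M \<in> matchings Y"
    show "real (card {p \<in> A \<times> B - Y. \<forall>q\<in>M. fst q \<noteq> fst p \<and> snd q \<noteq> snd p}) * g (card M)
      = (real (card A) - real (card M)) * (real (card B) - real (card M)) * g (card M)
        - real (card {p \<in> Y. fst p \<notin> fst ` M \<and> snd p \<notin> snd ` M}) * g (card M)"
      unfolding card_free_pairs_outside[OF M Y fin] by (simp only: left_diff_distrib)
  qed
  also have "\<dots> = (\<Sum>M\<in>matchings Y. (real (card A) - real (card M)) * (real (card B) - real (card M)) * g (card M))
      - (\<Sum>M\<in>matchings Y. real (card M) * g (card M - 1))"
    by (simp add: sum_subtractf sum_matching_extensions[OF finY])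
  finally show ?thesis .
qed

section \<open>Colourings of two cliques\<close>

definition cross_colourings :: "'a set \<Rightarrow> 'a set \<Rightarrow> ('a \<times> 'a) set \<Rightarrow> 'k set \<Rightarrow> ('a \<Rightarrow> 'k) set" where
  "cross_colourings A B Y K = {f \<in> (A \<union> B) \<rightarrow>\<^sub>E K. inj_on f A \<and> inj_on f B \<and>
     (\<forall>a\<in>A. \<forall>b\<in>B. f a = f b \<longrightarrow> (a, b) \<in> Y)}"

lemma finite_cross_colourings:
  "finite A \<Longrightarrow> finite B \<Longrightarrow> finite K \<Longrightarrow> finite (cross_colourings A B Y K)"
  unfolding cross_colourings_def by (rule finite_subset[of _ "(A \<union> B) \<rightarrow>\<^sub>E K"]) (auto intro: finite_PiE)

lemma card_cross_colourings_no_pairs: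
  assumes "A \<inter> B = {}" "finite A" "finite B" "finite K"
  shows "card (cross_colourings A B {} K) = falling_nat (card A + card B) (card K)"
proof -
  have "inj_on f (A \<union> B) \<longleftrightarrow> inj_on f A \<and> inj_on f B \<and> (\<forall>a\<in>A. \<forall>b\<in>B. f a \<noteq> f b)" for f
    using assms by (auto simp: inj_on_Un)
  hence "cross_colourings A B {} K = {f \<in> (A \<union> B) \<rightarrow>\<^sub>E K. inj_on f (A \<union> B)}"
    unfolding cross_colourings_def by auto
  thus ?thesis
    using card_inj_on_subset_funcset[of "A \<union> B" K "A \<union> B"] assms
    by (simp add: falling_nat_def card_Un_disjoint)
qed

lemma cross_colouring_extend:
  assumes g: "g \<in> cross_colourings (A - {a}) (B - {b}) {p \<in> Y. fst p \<noteq> a \<and> snd p \<noteq> b} (K - {c})"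
    and ab: "(a, b) \<in> Y" and Y: "Y \<subseteq> A \<times> B" and disj: "A \<inter> B = {}" and c: "c \<in> K"
  shows "g(a := c, b := c) \<in> cross_colourings A B Y K"
proof -
  let ?h = "g(a := c, b := c)"
  have a: "a \<in> A" "a \<notin> B" and b: "b \<in> B" "b \<notin> A" using ab Y disj by auto
  have gK: "g \<in> (A - {a} \<union> (B - {b})) \<rightarrow>\<^sub>E K - {c}"
    and inj: "inj_on g (A - {a})" "inj_on g (B - {b})"
    and cross: "\<forall>x\<in>A - {a}. \<forall>y\<in>B - {b}. g x = g y \<longrightarrow> (x, y) \<in> Y"
    using g by (auto simp: cross_colourings_def)
  have "?h \<in> (A \<union> B) \<rightarrow>\<^sub>E K"
    using gK a b c by (auto simp: PiE_iff extensional_def)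
  moreover have "inj_on ?h A"
  proof (rule inj_onI)
    fix x y assume "x \<in> A" "y \<in> A" "?h x = ?h y"
    thus "x = y" using inj(1) gK a b by (auto simp: inj_on_def PiE_iff split: if_splits)
  qed
  moreover have "inj_on ?h B"
  proof (rule inj_onI)
    fix x y assume "x \<in> B" "y \<in> B" "?h x = ?h y"
    thus "x = y" using inj(2) gK a b by (auto simp: inj_on_def PiE_iff split: if_splits)
  qed
  moreover have "\<forall>x\<in>A. \<forall>y\<in>B. ?h x = ?h y \<longrightarrow> (x, y) \<in> Y"
  proof (intro ballI impI)
    fix x y assume "x \<in> A" "y \<in> B" "?h x = ?h y"
    thus "(x, y) \<in> Y" using cross gK a b ab by (auto simp: PiE_iff split: if_splits)
  qed
  ultimately show ?thesis by (simp add: cross_colourings_def)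
qed

lemma card_cross_colourings_fibre:
  assumes ab: "(a, b) \<in> Y" and Y: "Y \<subseteq> A \<times> B" and disj: "A \<inter> B = {}" and c: "c \<in> K"
  shows "card {f \<in> cross_colourings A B Y K. f a = c \<and> f b = c}
       = card (cross_colourings (A - {a}) (B - {b}) {p \<in> Y. fst p \<noteq> a \<and> snd p \<noteq> b} (K - {c}))"
    (is "card ?S = card ?T")
proof -
  have a: "a \<in> A" "a \<notin> B" and b: "b \<in> B" "b \<notin> A" using ab Y disj by auto
  let ?r = "\<lambda>f. restrict f (A - {a} \<union> (B - {b}))"
  let ?e = "\<lambda>g. g(a := c, b := c)"
  have "bij_betw ?r ?S ?T"
  proof (rule bij_betw_byWitness[where f' = ?e])
    show "\<forall>f\<in>?S. ?e (?r f) = f"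
      using a b by (auto simp: cross_colourings_def PiE_iff extensional_def fun_eq_iff)
    show "\<forall>g\<in>?T. ?r (?e g) = g"
      using a b by (auto simp: cross_colourings_def PiE_iff extensional_def fun_eq_iff)
    show "?r ` ?S \<subseteq> ?T"
    proof
      fix h assume "h \<in> ?r ` ?S"
      then obtain f where f: "f \<in> ?S" and h: "h = ?r f" by blast
      have "f x \<noteq> c" if "x \<in> A - {a} \<union> (B - {b})" for x
        using f that a b by (auto simp: cross_colourings_def inj_on_def)
      hence "h \<in> (A - {a} \<union> (B - {b})) \<rightarrow>\<^sub>E K - {c}"
        using f unfolding h cross_colourings_def by (auto simp: PiE_iff)
      moreover have "inj_on h (A - {a})" "inj_on h (B - {b})"
        using f unfolding h cross_colourings_def by (auto simp: inj_on_def)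
      ultimately show "h \<in> ?T" using f unfolding h cross_colourings_def by auto
    qed
    show "?e ` ?T \<subseteq> ?S"
      using cross_colouring_extend[OF _ ab Y disj c] by auto
  qed
  thus ?thesis by (rule bij_betw_same_card)
qed

text \<open>Deletion of one admissible pair (a, b): a colouring either separates a and b, or it
  gives both the same colour c.\<close>
lemma card_cross_colourings_delete_pair:
  assumes ab: "(a, b) \<in> Y" and Y: "Y \<subseteq> A \<times> B" and disj: "A \<inter> B = {}"
    and fin: "finite A" "finite B" "finite K"
  shows "card (cross_colourings A B Y K) = card (cross_colourings A B (Y - {(a, b)}) K)
     + (\<Sum>c\<in>K. card (cross_colourings (A - {a}) (B - {b}) {p \<in> Y. fst p \<noteq> a \<and> snd p \<noteq> b} (K - {c})))"
proof -
  let ?S = "\<lambda>c. {f \<in> cross_colourings A B Y K. f a = c \<and> f b = c}"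
  have a: "a \<in> A" and b: "b \<in> B" using ab Y by auto
  have split: "cross_colourings A B Y K = cross_colourings A B (Y - {(a, b)}) K \<union> (\<Union>c\<in>K. ?S c)"
    using a b by (auto simp: cross_colourings_def PiE_iff)
  have disj_split: "cross_colourings A B (Y - {(a, b)}) K \<inter> (\<Union>c\<in>K. ?S c) = {}"
    using a b unfolding cross_colourings_def by fastforce
  have fin_cc: "finite (cross_colourings A B Z K)" for Z using fin by (rule finite_cross_colourings)
  have "card (cross_colourings A B Y K)
      = card (cross_colourings A B (Y - {(a, b)}) K) + card (\<Union>c\<in>K. ?S c)"
    by (subst split, rule card_Un_disjoint) (use fin_cc disj_split fin in auto)
  also have "card (\<Union>c\<in>K. ?S c) = (\<Sum>c\<in>K. card (?S c))"
    by (rule card_UN_disjoint) (use fin fin_cc in auto)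
  also have "\<dots> = (\<Sum>c\<in>K. card (cross_colourings (A - {a}) (B - {b})
                          {p \<in> Y. fst p \<noteq> a \<and> snd p \<noteq> b} (K - {c})))"
    by (rule sum.cong[OF refl card_cross_colourings_fibre[OF ab Y disj]])
  finally show ?thesis .
qed

text \<open>Counting colourings of two cliques in which colours may be shared only along the pairs
  of Y: a matching M of Y describes the shared colours, and the |A| + |B| - |M| colour
  classes are coloured injectively.\<close>
lemma card_cross_colourings:
  assumes "finite A" "finite B" "A \<inter> B = {}" "Y \<subseteq> A \<times> B" "finite K"
  shows "card (cross_colourings A B Y K)
       = (\<Sum>M\<in>matchings Y. falling_nat (card A + card B - card M) (card K))"
  using assms
proof (induction "card Y" arbitrary: A B Y K rule: less_induct)
  case less
  show ?case
  proof (cases "Y = {}")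
    case True
    thus ?thesis using less.prems by (simp add: matchings_empty card_cross_colourings_no_pairs)
  next
    case False
    then obtain a b where ab: "(a, b) \<in> Y" by auto
    have a: "a \<in> A" and b: "b \<in> B" using ab less.prems by auto
    have finY: "finite Y" using less.prems by (auto intro: finite_subset)
    define Y' where "Y' = {p \<in> Y. fst p \<noteq> a \<and> snd p \<noteq> b}"
    define n where "n = card A + card B"
    have Y'_sub: "Y' \<subseteq> (A - {a}) \<times> (B - {b})" using less.prems by (auto simp: Y'_def)
    have "(a, b) \<notin> Y'" by (simp add: Y'_def)
    hence "Y' \<subset> Y" using ab unfolding Y'_def by blast
    hence card_Y': "card Y' < card Y" using finY by (rule psubset_card_mono[rotated])
    have card_del: "card (Y - {(a, b)}) < card Y" using ab finY by (rule card_Diff1_less[rotated])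
    have "card A \<ge> 1" "card B \<ge> 1"
      using a b less.prems by (auto simp: Suc_le_eq card_gt_0_iff)
    hence cards: "card (A - {a}) + card (B - {b}) = n - 2" "n \<ge> 2"
      using a b less.prems by (auto simp: n_def)
    have IH_del: "card (cross_colourings A B (Y - {(a, b)}) K)
        = (\<Sum>M\<in>matchings (Y - {(a, b)}). falling_nat (n - card M) (card K))"
      using less.hyps[OF card_del, of A B K] less.prems by (auto simp: n_def)
    have IH_fibre: "card (cross_colourings (A - {a}) (B - {b}) Y' (K - {c}))
        = (\<Sum>M\<in>matchings Y'. falling_nat (n - 2 - card M) (card K - 1))" if "c \<in> K" for c
      using less.hyps[OF card_Y', of "A - {a}" "B - {b}" "K - {c}"] less.prems Y'_sub that cards
      by auto
    have step: "card K * falling_nat (n - 2 - card M) (card K - 1) = falling_nat (n - Suc (card M)) (card K)"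
      if "M \<in> matchings Y'" for M
    proof -
      have "card M \<le> card (A - {a})" "card M \<le> card (B - {b})"
        using matching_card_le[OF that Y'_sub] less.prems by auto
      hence "n - Suc (card M) = Suc (n - 2 - card M)" using cards by auto
      thus ?thesis by (simp add: falling_nat_Suc)
    qed
    have "card (cross_colourings A B Y K) = (\<Sum>M\<in>matchings (Y - {(a, b)}). falling_nat (n - card M) (card K))
        + card K * (\<Sum>M\<in>matchings Y'. falling_nat (n - 2 - card M) (card K - 1))"
      using card_cross_colourings_delete_pair[OF ab less.prems(4,3,1,2,5)] IH_del IH_fibre
      by (simp add: Y'_def)
    also have "\<dots> = (\<Sum>M\<in>matchings Y. falling_nat (n - card M) (card K))"
      using sum_matchings_split[OF ab finY, of "\<lambda>m. falling_nat (n - m) (card K)"] step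
      by (simp add: sum_distrib_left Y'_def)
    finally show ?thesis by (simp add: n_def)
  qed
qed

section \<open>The chromatic polynomial of a biclique\<close>

lemma bicliqueD:
  assumes "biclique j k V E A B"
  shows "simple_graph V E" "A \<inter> B = {}" "V = A \<union> B" "card A = j" "card B = k"
    "\<forall>x\<in>A. \<forall>y\<in>A. x \<noteq> y \<longrightarrow> {x, y} \<in> E"
    "\<forall>x\<in>B. \<forall>y\<in>B. x \<noteq> y \<longrightarrow> {x, y} \<in> E"
    "\<forall>e\<in>E. e \<subseteq> A \<or> e \<subseteq> B \<or> (\<exists>x\<in>A. \<exists>y\<in>B. e = {x, y})"
  using assms unfolding biclique_def by blast+

lemma biclique_finite: "biclique j k V E A B \<Longrightarrow> finite V \<and> finite A \<and> finite B"
  unfolding biclique_def simple_graph_def by auto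

lemma simple_graph_edge_ne: "simple_graph V E \<Longrightarrow> {x, y} \<in> E \<Longrightarrow> x \<noteq> y"
  unfolding simple_graph_def by force

definition cross_nonedges :: "'a set \<Rightarrow> 'a set \<Rightarrow> 'a set set \<Rightarrow> ('a \<times> 'a) set" where
  "cross_nonedges A B E = {p \<in> A \<times> B. {fst p, snd p} \<notin> E}"

lemma biclique_proper_colouring_iff:
  assumes "biclique j k V E A B"
  shows "(\<forall>x y. {x, y} \<in> E \<longrightarrow> f x \<noteq> f y) \<longleftrightarrow> inj_on f A \<and> inj_on f B \<and>
           (\<forall>a\<in>A. \<forall>b\<in>B. f a = f b \<longrightarrow> (a, b) \<in> cross_nonedges A B E)"
proof
  assume proper: "\<forall>x y. {x, y} \<in> E \<longrightarrow> f x \<noteq> f y"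
  have "inj_on f A" "inj_on f B"
    using proper bicliqueD(6,7)[OF assms] by (metis inj_onI)+
  moreover have "\<forall>a\<in>A. \<forall>b\<in>B. f a = f b \<longrightarrow> (a, b) \<in> cross_nonedges A B E"
    using proper by (auto simp: cross_nonedges_def)
  ultimately show "inj_on f A \<and> inj_on f B \<and> (\<forall>a\<in>A. \<forall>b\<in>B. f a = f b \<longrightarrow> (a, b) \<in> cross_nonedges A B E)"
    by blast
next
  assume H: "inj_on f A \<and> inj_on f B \<and> (\<forall>a\<in>A. \<forall>b\<in>B. f a = f b \<longrightarrow> (a, b) \<in> cross_nonedges A B E)"
  show "\<forall>x y. {x, y} \<in> E \<longrightarrow> f x \<noteq> f y"
  proof (intro allI impI)
    fix x y assume e: "{x, y} \<in> E"
    have xy: "x \<noteq> y" using simple_graph_edge_ne[OF bicliqueD(1)[OF assms] e] .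
    have "{x, y} \<subseteq> A \<or> {x, y} \<subseteq> B \<or> (\<exists>a\<in>A. \<exists>b\<in>B. {x, y} = {a, b})"
      using bspec[OF bicliqueD(8)[OF assms] e] .
    thus "f x \<noteq> f y"
    proof (elim disjE bexE)
      fix a b assume ab: "a \<in> A" "b \<in> B" "{x, y} = {a, b}"
      hence "(x = a \<and> y = b) \<or> (x = b \<and> y = a)" by (auto simp: doubleton_eq_iff)
      thus ?thesis using H ab e by (auto simp: insert_commute cross_nonedges_def)
    qed (use H xy in \<open>auto simp: inj_on_def\<close>)
  qed
qed

lemma num_colourings_biclique:
  assumes "biclique j k V E A B"
  shows "num_colourings V E n
       = (\<Sum>M\<in>matchings (cross_nonedges A B E). falling_nat (j + k - card M) n)"
proof -
  note D = bicliqueD[OF assms]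
  have "num_colourings V E n = card (cross_colourings A B (cross_nonedges A B E) {..<n})"
    unfolding num_colourings_def cross_colourings_def D(3)
    by (simp only: biclique_proper_colouring_iff[OF assms])
  also have "\<dots> = (\<Sum>M\<in>matchings (cross_nonedges A B E). falling_nat (j + k - card M) n)"
    using D biclique_finite[OF assms]
    by (subst card_cross_colourings) (auto simp: cross_nonedges_def)
  finally show ?thesis .
qed

lemma poly_eq_on_nat:
  fixes p q :: "int poly"
  assumes "\<And>n::nat. poly p (int n) = poly q (int n)"
  shows "p = q"
proof (rule ccontr)
  assume "p \<noteq> q"
  hence "finite {x. poly (p - q) x = 0}" by (intro poly_roots_finite) simp
  moreover have "range int \<subseteq> {x. poly (p - q) x = 0}" using assms by auto
  ultimately have "finite (range int)" by (rule finite_subset[rotated])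
  thus False using finite_imageD[of int "UNIV :: nat set"] by auto
qed

lemma chrom_poly_biclique:
  assumes "biclique j k V E A B"
  shows "chrom_poly V E = (\<Sum>M\<in>matchings (cross_nonedges A B E). falling_poly (j + k - card M))"
    (is "_ = ?P")
proof -
  have P: "poly ?P (int n) = int (num_colourings V E n)" for n
    by (simp add: num_colourings_biclique[OF assms] poly_sum poly_falling_poly_nat)
  show ?thesis unfolding chrom_poly_def
  proof (rule the_equality)
    show "\<forall>n. poly ?P (int n) = int (num_colourings V E n)" using P by blast
    fix p assume "\<forall>n. poly p (int n) = int (num_colourings V E n)"
    thus "p = ?P" using P by (intro poly_eq_on_nat) auto
  qed
qed

lemma falling_poly_add:
  "falling_poly (k + r) = falling_poly k * (\<Prod>i<r. [:- int (k + i), 1:])"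
  by (induction r) (simp_all add: falling_poly_def algebra_simps)

lemma falling_poly_nonzero: "falling_poly k \<noteq> 0"
  unfolding falling_poly_def by (subst prod_zero_iff) auto

lemma chrom_poly_biclique_factor:
  assumes "biclique j k V E A B"
  shows "chrom_poly V E = falling_poly k * interesting_factor k V E"
proof -
  let ?Y = "cross_nonedges A B E"
  let ?q = "\<Sum>M\<in>matchings ?Y. \<Prod>i<j - card M. [:- int (k + i), 1:]"
  have "card M \<le> j" if "M \<in> matchings ?Y" for M
    using matching_card_le[OF that, of A B] bicliqueD[OF assms] biclique_finite[OF assms]
    by (auto simp: cross_nonedges_def)
  hence "chrom_poly V E = (\<Sum>M\<in>matchings ?Y. falling_poly (k + (j - card M)))"
    unfolding chrom_poly_biclique[OF assms] by (intro sum.cong) (auto simp: add.commute)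
  also have "\<dots> = falling_poly k * ?q"
    by (simp add: falling_poly_add sum_distrib_left)
  finally have chrom: "chrom_poly V E = falling_poly k * ?q" .
  hence "interesting_factor k V E = ?q"
    unfolding interesting_factor_def using falling_poly_nonzero by simp
  thus ?thesis using chrom by simp
qed

lemma poly_falling_poly_gchoose:
  "real_of_int (poly (falling_poly k) a) = fact k * (real_of_int a gchoose k)"
  by (simp add: gbinomial_mult_fact poly_falling_poly lessThan_atLeast0)

text \<open>As the generalised
  binomial coefficient needs a field, the identity is read in the reals.\<close>
theorem chrom_poly_reflection:
  fixes c :: int
  assumes G: "biclique j k VG EG AG BG" and H: "biclique j k VH EH AH BH"
    and sym: "interesting_factor k VG EG =
              smult ((-1) ^ j) (pcompose (interesting_factor k VH EH) [:c, -1:])"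
  shows "poly (chrom_poly VG EG) (c + 1) =
           ((c + 1) gchoose k) * (-1) ^ (j + k) * poly (chrom_poly VH EH) (-1)"
proof -
  define h where "h = real_of_int (poly (interesting_factor k VH EH) (-1))"
  have "real_of_int (poly (chrom_poly VG EG) (c + 1)) = fact k * (real_of_int (c + 1) gchoose k) * ((-1) ^ j * h)"
    by (simp add: chrom_poly_biclique_factor[OF G] sym poly_pcompose h_def poly_falling_poly_gchoose)
  moreover have "real_of_int (poly (chrom_poly VH EH) (-1)) = fact k * (-1) ^ k * h"
    using of_int_gbinomial[of "-1" k, where 'a=real]
    by (simp add: chrom_poly_biclique_factor[OF H] h_def poly_falling_poly_gchoose)
  moreover have "(-1::real) ^ (j + k) * (-1) ^ k = (-1) ^ j"
    by (simp add: power_add mult.assoc power_mult_distrib[symmetric])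
  ultimately show ?thesis by (simp add: algebra_simps)
qed

section \<open>Acyclic orientations and sources\<close>

definition acyclic_orientations :: "'a set set \<Rightarrow> ('a \<times> 'a) set set" where
  "acyclic_orientations E = {R. orientation E R \<and> acyclic R}"

definition source :: "('a \<times> 'a) set \<Rightarrow> 'a \<Rightarrow> bool" where
  "source R v \<longleftrightarrow> (\<forall>u. (u, v) \<notin> R)"

definition delete_vertex :: "'a set set \<Rightarrow> 'a \<Rightarrow> 'a set set" where
  "delete_vertex E v = {e \<in> E. v \<notin> e}"

lemma simple_graph_delete_vertex: "simple_graph V E \<Longrightarrow> simple_graph V (delete_vertex E v)"
  unfolding simple_graph_def delete_vertex_def by auto

text \<open>A relation stays acyclic when edges leaving a vertex without incoming edges are added:
  no cycle can pass through such a vertex.\<close>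
lemma acyclic_add_source_edges:
  assumes src: "source R v" and acyc: "acyclic {p \<in> R. fst p \<noteq> v}"
  shows "acyclic R"
proof -
  let ?R0 = "{p \<in> R. fst p \<noteq> v}"
  have ends_not_v: "y \<noteq> v" if xy: "(x, y) \<in> R\<^sup>+" for x y
  proof -
    obtain z where "(z, y) \<in> R" using tranclD2[OF xy] by blast
    thus ?thesis using src by (auto simp: source_def)
  qed
  have avoid: "(x, y) \<in> ?R0\<^sup>+" if "(x, y) \<in> R\<^sup>+" "x \<noteq> v" for x y
    using that
  proof (induction rule: trancl_induct)
    case (base y)
    thus ?case by auto
  next
    case (step y z)
    have "(y, z) \<in> ?R0" using step.hyps ends_not_v by auto
    with step.IH step.prems show ?case by (simp add: trancl_into_trancl)
  qed
  show ?thesis unfolding acyclic_def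
  proof (intro allI notI)
    fix x assume x: "(x, x) \<in> R\<^sup>+"
    hence "(x, x) \<in> ?R0\<^sup>+" using avoid ends_not_v by blast
    thus False using acyc unfolding acyclic_def by blast
  qed
qed

lemma acyclic_orientation_delete_source:
  assumes R: "R \<in> acyclic_orientations E" and src: "source R v"
  shows "{p \<in> R. fst p \<noteq> v} \<in> acyclic_orientations (delete_vertex E v)"
proof -
  have "orientation (delete_vertex E v) {p \<in> R. fst p \<noteq> v}"
    using R src unfolding acyclic_orientations_def orientation_def source_def delete_vertex_def
    by auto
  moreover have "acyclic {p \<in> R. fst p \<noteq> v}"
    using R unfolding acyclic_orientations_def by (auto intro: acyclic_subset)
  ultimately show ?thesis by (simp add: acyclic_orientations_def)
qed

lemma acyclic_orientation_add_source:
  assumes G: "simple_graph V E" and R: "R \<in> acyclic_orientations (delete_vertex E v)"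
  shows "R \<union> {(v, u) | u. {v, u} \<in> E} \<in> acyclic_orientations E"
    and "source (R \<union> {(v, u) | u. {v, u} \<in> E}) v"
proof -
  define R' where "R' = R \<union> {(v, u) | u. {v, u} \<in> E}"
  have sub: "R \<subseteq> {(x, y). {x, y} \<in> E \<and> x \<noteq> v \<and> y \<noteq> v}"
    and orient: "\<forall>x y. {x, y} \<in> delete_vertex E v \<longrightarrow> ((x, y) \<in> R \<longleftrightarrow> (y, x) \<notin> R)"
    using R by (auto simp: acyclic_orientations_def orientation_def delete_vertex_def)
  have "{v, v} \<notin> E" using simple_graph_edge_ne[OF G] by blast
  hence src: "source R' v" using sub unfolding R'_def source_def by auto
  have "orientation E R'"
    unfolding orientation_def
  proof (intro conjI allI impI)
    show "R' \<subseteq> {(x, y). {x, y} \<in> E}" using sub unfolding R'_def by auto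
    fix x y assume e: "{x, y} \<in> E"
    have xy: "x \<noteq> y" using simple_graph_edge_ne[OF G e] .
    show "(x, y) \<in> R' \<longleftrightarrow> (y, x) \<notin> R'"
    proof (cases "x = v \<or> y = v")
      case True
      hence "(x, y) \<in> R' \<and> (y, x) \<notin> R' \<or> (y, x) \<in> R' \<and> (x, y) \<notin> R'"
      proof
        assume "x = v"
        thus ?thesis using e xy sub unfolding R'_def by auto
      next
        assume "y = v"
        thus ?thesis using e xy sub unfolding R'_def by (auto simp: insert_commute)
      qed
      thus ?thesis by blast
    next
      case False
      hence "(x, y) \<in> R' \<longleftrightarrow> (x, y) \<in> R" "(y, x) \<in> R' \<longleftrightarrow> (y, x) \<in> R"
        unfolding R'_def by auto
      moreover have "{x, y} \<in> delete_vertex E v" using e False by (auto simp: delete_vertex_def)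
      ultimately show ?thesis using orient by simp
    qed
  qed
  moreover have "{p \<in> R'. fst p \<noteq> v} = R" using sub unfolding R'_def by auto
  hence "acyclic R'"
    using acyclic_add_source_edges[OF src] R by (simp add: acyclic_orientations_def)
  ultimately show "R' \<in> acyclic_orientations E" by (simp add: acyclic_orientations_def)
  show "source R' v" by (rule src)
qed

lemma card_acyclic_orientations_source:
  assumes G: "simple_graph V E" and W: "v \<notin> W" "\<forall>w\<in>W. {v, w} \<notin> E"
  shows "card {R \<in> acyclic_orientations E. source R v \<and> (\<forall>w\<in>W. source R w)}
       = card {R \<in> acyclic_orientations (delete_vertex E v). \<forall>w\<in>W. source R w}"
proof -
  let ?L = "{R \<in> acyclic_orientations E. source R v \<and> (\<forall>w\<in>W. source R w)}"
  let ?Rt = "{R \<in> acyclic_orientations (delete_vertex E v). \<forall>w\<in>W. source R w}"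
  let ?del = "\<lambda>R. {p \<in> R. fst p \<noteq> v}"
  let ?add = "\<lambda>R. R \<union> {(v, u) | u. {v, u} \<in> E}"
  have "bij_betw ?del ?L ?Rt"
  proof (rule bij_betw_byWitness[where f' = ?add])
    show "\<forall>R\<in>?L. ?add (?del R) = R"
    proof
      fix R assume "R \<in> ?L"
      hence sub: "R \<subseteq> {(x, y). {x, y} \<in> E}"
        and orient: "\<forall>x y. {x, y} \<in> E \<longrightarrow> ((x, y) \<in> R \<longleftrightarrow> (y, x) \<notin> R)"
        and src: "\<forall>u. (u, v) \<notin> R"
        by (auto simp: acyclic_orientations_def orientation_def source_def)
      show "?add (?del R) = R"
      proof (intro equalityI subsetI)
        fix p assume "p \<in> ?add (?del R)"
        thus "p \<in> R" using orient src by blast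
      next
        fix p assume "p \<in> R"
        thus "p \<in> ?add (?del R)" using sub by (cases p) auto
      qed
    qed
    show "\<forall>R\<in>?Rt. ?del (?add R) = R"
    proof
      fix R assume "R \<in> ?Rt"
      hence "\<forall>p\<in>R. fst p \<noteq> v"
        by (auto simp: acyclic_orientations_def orientation_def delete_vertex_def)
      thus "?del (?add R) = R" by auto
    qed
    show "?del ` ?L \<subseteq> ?Rt"
      using acyclic_orientation_delete_source by (fastforce simp: source_def)
    show "?add ` ?Rt \<subseteq> ?L"
      using acyclic_orientation_add_source[OF G] W by (fastforce simp: source_def)
  qed
  thus ?thesis by (rule bij_betw_same_card)
qed

lemma acyclic_orientations_source:
  assumes "simple_graph V E"
  shows "card {R \<in> acyclic_orientations E. source R v} = card (acyclic_orientations (delete_vertex E v))"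
  using card_acyclic_orientations_source[OF assms, of v "{}"] by simp

lemma acyclic_orientations_source_pairs:
  assumes G: "simple_graph V E" and "a \<noteq> b" "{a, b} \<notin> E"
  shows "card {R \<in> acyclic_orientations E. source R a \<and> source R b}
       = card (acyclic_orientations (delete_vertex (delete_vertex E a) b))"
proof -
  have "card {R \<in> acyclic_orientations E. source R a \<and> source R b}
      = card {R \<in> acyclic_orientations (delete_vertex E a). source R b}"
    using card_acyclic_orientations_source[OF G, of a "{b}"] assms by simp
  also have "\<dots> = card (acyclic_orientations (delete_vertex (delete_vertex E a) b))"
    by (rule acyclic_orientations_source[OF simple_graph_delete_vertex[OF G]])
  finally show ?thesis .
qed

lemma acyclic_orientations_subset:
  "simple_graph V E \<Longrightarrow> R \<in> acyclic_orientations E \<Longrightarrow> R \<subseteq> V \<times> V"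
  unfolding acyclic_orientations_def orientation_def simple_graph_def by blast

lemma finite_acyclic_orientations:
  assumes "simple_graph V E"
  shows "finite (acyclic_orientations E)"
proof -
  have "acyclic_orientations E \<subseteq> Pow (V \<times> V)" using acyclic_orientations_subset[OF assms] by blast
  moreover have "finite V" using assms by (simp add: simple_graph_def)
  ultimately show ?thesis by (meson finite_Pow_iff finite_SigmaI finite_subset)
qed

lemma adjacent_sources:
  assumes "orientation E R" "{x, y} \<in> E" "source R x" "source R y"
  shows False
  using assms unfolding orientation_def source_def by blast

text \<open>An acyclic orientation of a nonempty finite graph has a source: a minimal element
  of the well-founded edge relation.\<close>
lemma acyclic_orientation_has_source:
  assumes G: "simple_graph V E" and R: "R \<in> acyclic_orientations E" and ne: "V \<noteq> {}"
  shows "\<exists>v\<in>V. source R v"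
proof -
  have sub: "R \<subseteq> V \<times> V" using acyclic_orientations_subset[OF G R] .
  hence "finite R" using G by (meson finite_SigmaI finite_subset simple_graph_def)
  hence "wf R" using R by (intro finite_acyclic_wf) (auto simp: acyclic_orientations_def)
  then obtain z where "z \<in> V" and min: "\<And>y. (y, z) \<in> R \<Longrightarrow> y \<notin> V"
    using ne wfE_min by (metis ex_in_conv)
  moreover have "source R z" unfolding source_def using min sub by blast
  ultimately show ?thesis by blast
qed

section \<open>Acyclic orientations of a biclique\<close>

text \<open>In an acyclic orientation of a nonempty biclique each clique has at most one source and
  there is at least one source; two sources in different cliques are non-adjacent.\<close>
lemma card_sources_biclique:
  assumes bq: "biclique j k V E A B" and ne: "V \<noteq> {}" and R: "R \<in> acyclic_orientations E"
  shows "card {v \<in> V. source R v}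
       = 1 + card {p \<in> cross_nonedges A B E. source R (fst p) \<and> source R (snd p)}"
proof -
  note D = bicliqueD[OF bq]
  have fin: "finite A" "finite B" using biclique_finite[OF bq] by auto
  have orient: "orientation E R" using R by (simp add: acyclic_orientations_def)
  define SA SB where "SA = {a \<in> A. source R a}" and "SB = {b \<in> B. source R b}"
  have finS: "finite SA" "finite SB" using fin by (auto simp: SA_def SB_def)
  have "card {v \<in> V. source R v} = card SA + card SB"
    using D(2,3) finS by (subst card_Un_disjoint[symmetric]) (auto simp: SA_def SB_def intro: arg_cong[where f = card])
  moreover have "card SA \<le> 1"
    using adjacent_sources[OF orient] D(6) finS by (auto simp: card_le_Suc0_iff_eq SA_def)
  moreover have "card SB \<le> 1"
    using adjacent_sources[OF orient] D(7) finS by (auto simp: card_le_Suc0_iff_eq SB_def)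
  moreover have "card SA + card SB \<ge> 1"
    using acyclic_orientation_has_source[OF D(1) R ne] D(3) finS
    by (auto simp: SA_def SB_def Suc_le_eq card_gt_0_iff)
  moreover have "{p \<in> cross_nonedges A B E. source R (fst p) \<and> source R (snd p)} = SA \<times> SB"
    using adjacent_sources[OF orient] by (auto simp: cross_nonedges_def SA_def SB_def)
  ultimately show ?thesis
    by (cases "card SA"; cases "card SB") (auto simp: card_cartesian_product)
qed

lemma acyclic_orientations_source_count:
  assumes bq: "biclique j k V E A B" and ne: "V \<noteq> {}"
  shows "card (acyclic_orientations E)
       + (\<Sum>p\<in>cross_nonedges A B E. card {R \<in> acyclic_orientations E. source R (fst p) \<and> source R (snd p)})
     = (\<Sum>v\<in>V. card {R \<in> acyclic_orientations E. source R v})"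
proof -
  let ?AO = "acyclic_orientations E" and ?X = "cross_nonedges A B E"
  have fin: "finite V" "finite ?X" "finite ?AO"
    using biclique_finite[OF bq] finite_acyclic_orientations[OF bicliqueD(1)[OF bq]]
    by (auto simp: cross_nonedges_def)
  have "(\<Sum>v\<in>V. card {R \<in> ?AO. source R v}) = (\<Sum>R\<in>?AO. card {v \<in> V. source R v})"
    by (rule sum_card_swap) (use fin in auto)
  also have "\<dots> = (\<Sum>R\<in>?AO. 1 + card {p \<in> ?X. source R (fst p) \<and> source R (snd p)})"
    using card_sources_biclique[OF bq ne] by simp
  also have "\<dots> = (\<Sum>R\<in>?AO. 1) + (\<Sum>R\<in>?AO. card {p \<in> ?X. source R (fst p) \<and> source R (snd p)})"
    by (rule sum.distrib)
  also have "\<dots> = card ?AO + (\<Sum>p\<in>?X. card {R \<in> ?AO. source R (fst p) \<and> source R (snd p)})"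
    by (simp add: sum_card_swap[OF fin(3,2)])
  finally show ?thesis by simp
qed

lemma biclique_delete_vertex:
  assumes bq: "biclique j k V E A B"
  shows "biclique (card (A - {v})) (card (B - {v})) (V - {v}) (delete_vertex E v) (A - {v}) (B - {v})"
proof -
  note D = bicliqueD[OF bq]
  have "simple_graph (V - {v}) (delete_vertex E v)"
    using D(1) unfolding simple_graph_def delete_vertex_def by auto
  moreover have "e \<subseteq> A - {v} \<or> e \<subseteq> B - {v} \<or> (\<exists>x\<in>A - {v}. \<exists>y\<in>B - {v}. e = {x, y})"
    if e: "e \<in> delete_vertex E v" for e
  proof -
    have "v \<notin> e" "e \<in> E" using e by (auto simp: delete_vertex_def)
    thus ?thesis using bspec[OF D(8), of e] by blast
  qed
  ultimately show ?thesis
    using D(2,3,6,7) unfolding biclique_def by (auto simp: delete_vertex_def)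
qed

definition cross_edges :: "'a set \<Rightarrow> 'a set \<Rightarrow> 'a set set \<Rightarrow> ('a \<times> 'a) set" where
  "cross_edges A B E = {p \<in> A \<times> B. {fst p, snd p} \<in> E}"

lemma biclique_delete_fst:
  assumes bq: "biclique j k V E A B" and a: "a \<in> A"
  shows "biclique (j - 1) k (V - {a}) (delete_vertex E a) (A - {a}) B"
    and "cross_edges (A - {a}) B (delete_vertex E a) = {p \<in> cross_edges A B E. fst p \<noteq> a}"
proof -
  have "a \<notin> B" "finite A" using a bicliqueD(2)[OF bq] biclique_finite[OF bq] by auto
  thus "biclique (j - 1) k (V - {a}) (delete_vertex E a) (A - {a}) B"
    using biclique_delete_vertex[OF bq, of a] a bicliqueD(4,5)[OF bq] by simp
  show "cross_edges (A - {a}) B (delete_vertex E a) = {p \<in> cross_edges A B E. fst p \<noteq> a}"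
    using \<open>a \<notin> B\<close> by (auto simp: cross_edges_def delete_vertex_def)
qed

lemma biclique_delete_snd:
  assumes bq: "biclique j k V E A B" and b: "b \<in> B"
  shows "biclique j (k - 1) (V - {b}) (delete_vertex E b) A (B - {b})"
    and "cross_edges A (B - {b}) (delete_vertex E b) = {p \<in> cross_edges A B E. snd p \<noteq> b}"
proof -
  have "b \<notin> A" "finite B" using b bicliqueD(2)[OF bq] biclique_finite[OF bq] by auto
  thus "biclique j (k - 1) (V - {b}) (delete_vertex E b) A (B - {b})"
    using biclique_delete_vertex[OF bq, of b] b bicliqueD(4,5)[OF bq] by simp
  show "cross_edges A (B - {b}) (delete_vertex E b) = {p \<in> cross_edges A B E. snd p \<noteq> b}"
    using \<open>b \<notin> A\<close> by (auto simp: cross_edges_def delete_vertex_def)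
qed

lemma biclique_delete_pair:
  assumes bq: "biclique j k V E A B" and a: "a \<in> A" and b: "b \<in> B"
  shows "biclique (j - 1) (k - 1) (V - {a} - {b}) (delete_vertex (delete_vertex E a) b) (A - {a}) (B - {b})"
    and "cross_edges (A - {a}) (B - {b}) (delete_vertex (delete_vertex E a) b)
           = {p \<in> cross_edges A B E. fst p \<noteq> a \<and> snd p \<noteq> b}"
  using biclique_delete_snd[OF biclique_delete_fst(1)[OF bq a], of b]
    biclique_delete_fst(2)[OF bq a] b by auto

text \<open>The recursion for acyclic orientations of a nonempty biclique, obtained from the double
  counting of sources: every term on the right is a biclique with fewer vertices.\<close>
lemma card_acyclic_orientations_delete:
  assumes bq: "biclique j k V E A B" and ne: "V \<noteq> {}"
  shows "real (card (acyclic_orientations E))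
       = (\<Sum>a\<in>A. real (card (acyclic_orientations (delete_vertex E a))))
       + (\<Sum>b\<in>B. real (card (acyclic_orientations (delete_vertex E b))))
       - (\<Sum>p\<in>A \<times> B - cross_edges A B E.
            real (card (acyclic_orientations (delete_vertex (delete_vertex E (fst p)) (snd p)))))"
proof -
  note D = bicliqueD[OF bq]
  let ?AO = "acyclic_orientations"
  have fin: "finite A" "finite B" using biclique_finite[OF bq] by auto
  have nonedges: "cross_nonedges A B E = A \<times> B - cross_edges A B E"
    by (auto simp: cross_edges_def cross_nonedges_def)
  have pairs: "card {R \<in> ?AO E. source R (fst p) \<and> source R (snd p)}
      = card (?AO (delete_vertex (delete_vertex E (fst p)) (snd p)))"
    if "p \<in> cross_nonedges A B E" for p
    using that D(2) by (intro acyclic_orientations_source_pairs[OF D(1)]) (auto simp: cross_nonedges_def)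
  have "real (card (?AO E)) = (\<Sum>v\<in>V. real (card {R \<in> ?AO E. source R v}))
      - (\<Sum>p\<in>cross_nonedges A B E. real (card {R \<in> ?AO E. source R (fst p) \<and> source R (snd p)}))"
    using arg_cong[OF acyclic_orientations_source_count[OF bq ne], of real] by (simp add: of_nat_sum)
  also have "(\<Sum>v\<in>V. real (card {R \<in> ?AO E. source R v}))
      = (\<Sum>a\<in>A. real (card (?AO (delete_vertex E a)))) + (\<Sum>b\<in>B. real (card (?AO (delete_vertex E b))))"
    unfolding D(3) using fin D(2) by (simp add: sum.union_disjoint acyclic_orientations_source[OF D(1)])
  also have "(\<Sum>p\<in>cross_nonedges A B E. real (card {R \<in> ?AO E. source R (fst p) \<and> source R (snd p)}))
      = (\<Sum>p\<in>A \<times> B - cross_edges A B E. real (card (?AO (delete_vertex (delete_vertex E (fst p)) (snd p)))))"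
    by (rule sum.cong[OF nonedges]) (simp add: pairs nonedges)
  finally show ?thesis .
qed

definition orient_weight :: "nat \<Rightarrow> nat \<Rightarrow> nat \<Rightarrow> real" where
  "orient_weight j k m = fact j * fact k / fact m"

definition orient_formula :: "nat \<Rightarrow> nat \<Rightarrow> ('a \<times> 'b) set \<Rightarrow> real" where
  "orient_formula j k Y = (\<Sum>M\<in>matchings Y. orient_weight j k (card M))"

lemma orient_weight_rec:
  assumes "m \<le> j" "m \<le> k" "0 < j + k"
  shows "(real j - real m) * orient_weight (j - 1) k m + (real k - real m) * orient_weight j (k - 1) m
     - (real j - real m) * (real k - real m) * orient_weight (j - 1) (k - 1) m
     + real m * orient_weight (j - 1) (k - 1) (m - 1) = orient_weight j k m"
proof (cases "j = 0 \<or> k = 0")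
  case True
  hence "m = 0" using assms by auto
  thus ?thesis using True assms
    by (auto simp: orient_weight_def fact_reduce[of k] fact_reduce[of j])
next
  case False
  define J K where "J = (fact (j - 1) :: real)" and "K = (fact (k - 1) :: real)"
  have fj: "(fact j :: real) = real j * J" and fk: "(fact k :: real) = real k * K"
    using False by (simp_all add: J_def K_def fact_reduce[of j] fact_reduce[of k])
  have JK: "J > 0" "K > 0" by (auto simp: J_def K_def)
  show ?thesis
  proof (cases "m = 0")
    case True
    thus ?thesis unfolding orient_weight_def fj fk J_def[symmetric] K_def[symmetric]
      by (simp add: algebra_simps)
  next
    case False
    define F where "F = (fact (m - 1) :: real)"
    have fm: "(fact m :: real) = real m * F" using False by (simp add: F_def fact_reduce[of m])
    have "F > 0" by (simp add: F_def)
    thus ?thesis unfolding orient_weight_def fj fk fm J_def[symmetric] K_def[symmetric] F_def[symmetric]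
      using JK False by (simp add: field_simps)
  qed
qed

lemma orient_formula_rec:
  assumes fin: "finite A" "finite B" and Y: "Y \<subseteq> A \<times> B" and ne: "A \<union> B \<noteq> {}"
  shows "orient_formula (card A) (card B) Y =
      (\<Sum>a\<in>A. orient_formula (card A - 1) (card B) {p \<in> Y. fst p \<noteq> a})
    + (\<Sum>b\<in>B. orient_formula (card A) (card B - 1) {p \<in> Y. snd p \<noteq> b})
    - (\<Sum>p\<in>A \<times> B - Y. orient_formula (card A - 1) (card B - 1) {q \<in> Y. fst q \<noteq> fst p \<and> snd q \<noteq> snd p})"
proof -
  define j k where "j = card A" and "k = card B"
  have jk: "0 < j + k" using ne fin by (auto simp: j_def k_def card_gt_0_iff)
  have le: "card M \<le> j" "card M \<le> k" if "M \<in> matchings Y" for M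
    using matching_card_le[OF that Y fin] by (auto simp: j_def k_def)
  have "orient_formula j k Y = (\<Sum>M\<in>matchings Y.
        (real j - real (card M)) * orient_weight (j - 1) k (card M)
      + (real k - real (card M)) * orient_weight j (k - 1) (card M)
      - (real j - real (card M)) * (real k - real (card M)) * orient_weight (j - 1) (k - 1) (card M)
      + real (card M) * orient_weight (j - 1) (k - 1) (card M - 1))"
    unfolding orient_formula_def using orient_weight_rec[OF le jk] by (intro sum.cong) auto
  thus ?thesis
    unfolding orient_formula_def j_def k_def
    by (simp add: sum_matchings_delete_fst[OF fin Y] sum_matchings_delete_snd[OF fin Y]
        sum_matchings_delete_pair[OF fin Y] sum.distrib sum_subtractf)
qed

text \<open>Induction on the number of vertices: both sides
  satisfy the same deletion recursion.\<close>
theorem card_acyclic_orientations_biclique: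
  assumes "biclique j k V E A B"
  shows "real (card (acyclic_orientations E)) = orient_formula j k (cross_edges A B E)"
  using assms
proof (induction "card V" arbitrary: j k V E A B rule: less_induct)
  case less
  note bq = less.prems and D = bicliqueD[OF less.prems]
  have fin: "finite V" "finite A" "finite B" using biclique_finite[OF bq] by auto
  define Y where "Y = cross_edges A B E"
  let ?AO = "acyclic_orientations"
  show ?case
  proof (cases "V = {}")
    case True
    hence "A = {}" "B = {}" "E = {}" using D(1,3) unfolding simple_graph_def by auto
    moreover from this(3) have "?AO E = {{}}"
      unfolding acyclic_orientations_def orientation_def acyclic_def by auto
    ultimately show ?thesis
      using D(4,5) by (simp add: orient_formula_def orient_weight_def matchings_empty cross_edges_def)
  next
    case ne: False
    have smaller: "card (V - {v} - {w}) < card V" "card (V - {v}) < card V" if "v \<in> V" for v w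
      using card_Diff1_less[OF fin(1) that] card_mono[of "V - {v}" "V - {v} - {w}"] fin(1) by auto
    have A: "real (card (?AO (delete_vertex E a))) = orient_formula (card A - 1) (card B) {p \<in> Y. fst p \<noteq> a}"
      if "a \<in> A" for a
      using less.hyps[OF _ biclique_delete_fst(1)[OF bq that]] smaller(2)[of a] that D(3,4,5)
      by (simp add: biclique_delete_fst(2)[OF bq that] Y_def)
    have B: "real (card (?AO (delete_vertex E b))) = orient_formula (card A) (card B - 1) {p \<in> Y. snd p \<noteq> b}"
      if "b \<in> B" for b
      using less.hyps[OF _ biclique_delete_snd(1)[OF bq that]] smaller(2)[of b] that D(3,4,5)
      by (simp add: biclique_delete_snd(2)[OF bq that] Y_def)
    have AB: "real (card (?AO (delete_vertex (delete_vertex E (fst p)) (snd p))))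
        = orient_formula (card A - 1) (card B - 1) {q \<in> Y. fst q \<noteq> fst p \<and> snd q \<noteq> snd p}"
      if "p \<in> A \<times> B - Y" for p
      using less.hyps[OF _ biclique_delete_pair(1)[OF bq]] smaller(1)[of "fst p" "snd p"] that D(3,4,5)
      by (auto simp: biclique_delete_pair(2)[OF bq] Y_def)
    have "real (card (?AO E))
        = (\<Sum>a\<in>A. orient_formula (card A - 1) (card B) {p \<in> Y. fst p \<noteq> a})
        + (\<Sum>b\<in>B. orient_formula (card A) (card B - 1) {p \<in> Y. snd p \<noteq> b})
        - (\<Sum>p\<in>A \<times> B - Y. orient_formula (card A - 1) (card B - 1) {q \<in> Y. fst q \<noteq> fst p \<and> snd q \<noteq> snd p})"
      unfolding card_acyclic_orientations_delete[OF bq ne] Y_def[symmetric] using A B AB by simp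
    also have "\<dots> = orient_formula (card A) (card B) Y"
      using orient_formula_rec[OF fin(2,3)] ne D(3) by (simp add: Y_def cross_edges_def)
    finally show ?thesis using D(4,5) by (simp add: Y_def)
  qed
qed

section \<open>Colourings of G versus acyclic orientations of the complement\<close>

text \<open>Second claim: for complementary bicliques the matchings of non-edges of G are the
  matchings of bridging edges of H, and (j+k)_{j+k-m} = (j+k)!/m! = C(j+k,k) j! k!/m!.\<close>
theorem colourings_complementary_biclique:
  assumes G: "biclique j k V EG A B" and H: "biclique j k V EH A B"
    and compl: "complementary A B EG EH"
  shows "num_colourings V EG (j + k) = ((j + k) choose k) * num_acyclic_orientations EH"
proof -
  let ?Y = "cross_nonedges A B EG"
  have Y: "cross_edges A B EH = ?Y"
    using compl by (auto simp: complementary_def cross_edges_def cross_nonedges_def)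
  have le: "card M \<le> j + k" if "M \<in> matchings ?Y" for M
    using matching_card_le[OF that, of A B] bicliqueD[OF G] biclique_finite[OF G]
    by (fastforce simp: cross_nonedges_def)
  have falling: "real (falling_nat (j + k - card M) (j + k)) = fact (j + k) / fact (card M)"
    if "M \<in> matchings ?Y" for M
  proof -
    have "falling_nat (j + k - card M) (j + k) * fact (card M) = (fact (j + k) :: nat)"
      using falling_nat_fact[of "j + k - card M" "j + k"] le[OF that] by simp
    hence "real (falling_nat (j + k - card M) (j + k)) * fact (card M) = fact (j + k)"
      by (metis of_nat_fact of_nat_mult)
    thus ?thesis by (simp add: field_simps)
  qed
  have binom: "real ((j + k) choose k) * (fact j * fact k) = fact (j + k)"
  proof -
    have "((j + k) choose k) * (fact j * fact k) = (fact (j + k) :: nat)"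
      using binomial_fact_lemma[of k "j + k"] by (simp add: algebra_simps)
    thus ?thesis by (metis of_nat_fact of_nat_mult)
  qed
  have "real (num_colourings V EG (j + k)) = (\<Sum>M\<in>matchings ?Y. fact (j + k) / fact (card M))"
    using falling by (simp add: num_colourings_biclique[OF G])
  also have "\<dots> = real ((j + k) choose k) * (\<Sum>M\<in>matchings ?Y. fact j * fact k / fact (card M))"
    by (simp add: sum_distrib_left binom[symmetric] mult.assoc)
  also have "\<dots> = real ((j + k) choose k) * real (num_acyclic_orientations EH)"
    using card_acyclic_orientations_biclique[OF H]
    by (simp add: Y orient_formula_def orient_weight_def num_acyclic_orientations_def
        acyclic_orientations_def)
  finally show ?thesis by (simp flip: of_nat_mult)
qed

text \<open>The two claims hold for all j and k.\<close>
theorem mainTheorem6: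
  fixes j k :: nat
  assumes "1 \<le> j" and "j \<le> k"
  shows "(\<forall>(VG::'a set) EG AG BG (VH::'b set) EH AH BH (c::int).
            biclique j k VG EG AG BG \<and> biclique j k VH EH AH BH \<and>
            interesting_factor k VG EG =
              smult ((-1) ^ j) (pcompose (interesting_factor k VH EH) [:c, -1:])
            \<longrightarrow> poly (chrom_poly VG EG) (c + 1) =
                 ((c + 1) gchoose k) * (-1) ^ (j + k) * poly (chrom_poly VH EH) (-1))
       \<and> (\<forall>(V::'c set) A B EG EH.
            biclique j k V EG A B \<and> biclique j k V EH A B \<and> complementary A B EG EH
            \<longrightarrow> num_colourings V EG (j + k) = ((j + k) choose k) * num_acyclic_orientations EH)"
  using chrom_poly_reflection colourings_complementary_biclique by blast

end
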